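(* Let $R$ be a relational type, possibly containing the type variable $X$ free, with $X\in^+ R$, and let $\gamma$ be an environment defined on the free type variables of $\mathrm{Rec}\,X.R$. Then for all terms $t_1,t_2$: $t_1\,\llbracket \mathrm{Rec}\,X.R \simeq [\mathrm{Rec}\,X.R/X]R\rrbracket_\gamma\,t_2$.
   Context: Terms are those of the pure untyped $\lambda$-calculus, up to $\alpha$-equivalence; $=_{\beta\eta}$ is $\beta\eta$-convertibility. Relational types: $R ::= X \mid R\to R' \mid \forall X.R \mid R^{\cup} \mid R\cdot R' \mid t$ (last form: promotion of a term); $[R/X]R'$ is capture-avoiding substitution. A relation $r$ on terms is $\beta\eta$-closed if $t_1\,r\,t_2$, $t_1'=_{\beta\eta}t_1$, $t_2'=_{\beta\eta}t_2$ imply $t_1'\,r\,t_2'$; $\mathcal{R}$ is the set of such relations; environments $\gamma$ map finitely many type variables to $\mathcal{R}$. Interpretation: $\llbracket X\rrbracket_\gamma=\gamma(X)$; $t\,\llbracket R\to R'\rrbracket_\gamma\,t'$ iff for all $a,a'$ with $a\,\llbracket R\rrbracket_\gamma\,a'$, $t\,a\,\llbracket R'\rrbracket_\gamma\,t'\,a'$; $\llbracket \forall X.R\rrbracket_\gamma=\bigcap_{r\in\mathcal{R}}\llbracket R\rrbracket_{\gamma[X\mapsto r]}$; $t\,\llbracket R^\cup\rrbracket_\gamma\,t'$ iff $t'\,\llbracket R\rrbracket_\gamma\,t$; $t\,\llbracket R\cdot R'\rrbracket_\gamma\,t'$ iff $\exists t''$ with $t\,\llbracket R\rrbracket_\gamma\,t''$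 and $t''\,\llbracket R'\rrbracket_\gamma\,t'$; $\llbracket \hat t\rrbracket_\gamma=\{(t,t')\mid \hat t\,t=_{\beta\eta}t'\}$. Abbreviations: $I:=\lambda x.x$, $K:=\lambda x.\lambda y.x$; $t\bullet R:=t\cdot R\cdot t^\cup$; $R\subseteq R':=(K\,I)\bullet(R\to R')$; $R\Rightarrow R':=K\bullet(R\to R')$; $R\simeq R':=(R\subseteq R')\cdot(R'\subseteq R)$; $\mathrm{Rec}\,X.R := \forall X.(R\subseteq X)\Rightarrow X$. With polarities $p\in\{+,-\}$ and $\bar p$ the other, $X\in^pR$ is defined by: $X\in^+X$; $X\in^pY$ for type variables $Y\ne X$; $X\in^p(R\to R')$ iff $X\in^{\bar p}R$ and $X\in^pR'$; $X\in^p\forall Y.R$ iff $X\in^pR$; $X\in^p(R\cdot R')$ iff $X\in^pR$ and $X\in^pR'$; $X\in^pR^\cup$ iff $X\in^pR$; $X\in^p t$ for every promoted term. *)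

theory Defs
  imports Main
begin

datatype trm = Var nat | App trm trm | Lam trm

primrec lift :: "trm \<Rightarrow> nat \<Rightarrow> trm" where
  "lift (Var i) k = (if i < k then Var i else Var (Suc i))"
| "lift (App s t) k = App (lift s k) (lift t k)"
| "lift (Lam s) k = Lam (lift s (Suc k))"

primrec subst :: "trm \<Rightarrow> trm \<Rightarrow> nat \<Rightarrow> trm" where
  "subst (Var i) s k = (if k < i then Var (i - 1) else if i = k then s else Var i)"
| "subst (App t u) s k = App (subst t s k) (subst u s k)"
| "subst (Lam t) s k = Lam (subst t (lift s 0) (Suc k))"

inductive betaeta :: "trm \<Rightarrow> trm \<Rightarrow> bool" where
  beta: "betaeta (App (Lam s) t) (subst s t 0)"
| eta: "betaeta (Lam (App (lift t 0) (Var 0))) t"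
| appL: "betaeta s s' \<Longrightarrow> betaeta (App s t) (App s' t)"
| appR: "betaeta t t' \<Longrightarrow> betaeta (App s t) (App s t')"
| abs: "betaeta s s' \<Longrightarrow> betaeta (Lam s) (Lam s')"

definition conv :: "trm \<Rightarrow> trm \<Rightarrow> bool" where
  "conv = equivclp betaeta"

datatype rty = TV nat | Arr rty rty | All rty | Cnv rty | Cmp rty rty | Prom trm

primrec liftT :: "rty \<Rightarrow> nat \<Rightarrow> rty" where
  "liftT (TV i) k = (if i < k then TV i else TV (Suc i))"
| "liftT (Arr R S) k = Arr (liftT R k) (liftT S k)"
| "liftT (All R) k = All (liftT R (Suc k))"
| "liftT (Cnv R) k = Cnv (liftT R k)"
| "liftT (Cmp R S) k = Cmp (liftT R k) (liftT S k)"
| "liftT (Prom t) k = Prom t"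

primrec substT :: "rty \<Rightarrow> rty \<Rightarrow> nat \<Rightarrow> rty" where
  "substT (TV i) S k = (if i < k then TV i else if i = k then S else TV (i - 1))"
| "substT (Arr R R') S k = Arr (substT R S k) (substT R' S k)"
| "substT (All R) S k = All (substT R (liftT S 0) (Suc k))"
| "substT (Cnv R) S k = Cnv (substT R S k)"
| "substT (Cmp R R') S k = Cmp (substT R S k) (substT R' S k)"
| "substT (Prom t) S k = Prom t"

primrec fvs :: "rty \<Rightarrow> nat set" where
  "fvs (TV i) = {i}"
| "fvs (Arr R S) = fvs R \<union> fvs S"
| "fvs (All R) = (\<lambda>i. i - 1) ` (fvs R - {0})"
| "fvs (Cnv R) = fvs R"
| "fvs (Cmp R S) = fvs R \<union> fvs S"
| "fvs (Prom t) = {}"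

text \<open>Polarity: pol True k R means "k \<in>+ R", pol False k R means "k \<in>- R".\<close>
primrec pol :: "bool \<Rightarrow> nat \<Rightarrow> rty \<Rightarrow> bool" where
  "pol p k (TV i) = (if i = k then p else True)"
| "pol p k (Arr R S) = (pol (\<not> p) k R \<and> pol p k S)"
| "pol p k (All R) = pol p (Suc k) R"
| "pol p k (Cnv R) = pol p k R"
| "pol p k (Cmp R S) = (pol p k R \<and> pol p k S)"
| "pol p k (Prom t) = True"

definition bclosed :: "(trm \<Rightarrow> trm \<Rightarrow> bool) \<Rightarrow> bool" where
  "bclosed r \<longleftrightarrow> (\<forall>t1 t2 t1' t2'. r t1 t2 \<longrightarrow> conv t1' t1 \<longrightarrow> conv t2' t2 \<longrightarrow> r t1' t2')"

primrec interp :: "(nat \<Rightarrow> trm \<Rightarrow> trm \<Rightarrow> bool) \<Rightarrow> rty \<Rightarrow> trm \<Rightarrow> trm \<Rightarrow> bool" where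
  "interp \<gamma> (TV i) = \<gamma> i"
| "interp \<gamma> (Arr R S) = (\<lambda>t t'. \<forall>a a'. interp \<gamma> R a a' \<longrightarrow> interp \<gamma> S (App t a) (App t' a'))"
| "interp \<gamma> (All R) = (\<lambda>t t'. \<forall>r. bclosed r \<longrightarrow> interp (case_nat r \<gamma>) R t t')"
| "interp \<gamma> (Cnv R) = (\<lambda>t t'. interp \<gamma> R t' t)"
| "interp \<gamma> (Cmp R S) = (\<lambda>t t'. \<exists>t''. interp \<gamma> R t t'' \<and> interp \<gamma> S t'' t')"
| "interp \<gamma> (Prom u) = (\<lambda>t t'. conv (App u t) t')"

definition I_trm :: trm where "I_trm = Lam (Var 0)"
definition K_trm :: trm where "K_trm = Lam (Lam (Var 1))"

definition bullet :: "trm \<Rightarrow> rty \<Rightarrow> rty" where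
  "bullet t R = Cmp (Cmp (Prom t) R) (Cnv (Prom t))"

definition Incl :: "rty \<Rightarrow> rty \<Rightarrow> rty" where
  "Incl R S = bullet (App K_trm I_trm) (Arr R S)"

definition Impl :: "rty \<Rightarrow> rty \<Rightarrow> rty" where
  "Impl R S = bullet K_trm (Arr R S)"

definition Equi :: "rty \<Rightarrow> rty \<Rightarrow> rty" where
  "Equi R S = Cmp (Incl R S) (Incl S R)"

text \<open>Rec X.R = forall X. (R \<subseteq> X) \<Rightarrow> X, with X being index 0 of R.\<close>
definition RecT :: "rty \<Rightarrow> rty" where
  "RecT R = All (Impl (Incl R (TV 0)) (TV 0))"

end

theory Submission
  imports Defs
begin

(* Since K I a b reduces to b and K a b to a, the interpretation of R \<subseteq> S relates every pair of
   terms when [[R]] is contained in [[S]] and no pair otherwise, and R \<Rightarrow> S behaves like an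
   implication. Hence [[Rec X.R]] is the intersection of all beta-eta-closed relations r with
   F r \<le> r, where F r = [[R]] with X interpreted by r. Positivity of X makes F monotone and F
   preserves beta-eta-closure, so the Knaster-Tarski argument, restricted to closed relations,
   shows that this intersection is a fixed point of F. By the substitution lemma
   [[[Rec X.R/X]R]] = F [[Rec X.R]], so both inclusions hold and the equivalence type relates
   any two terms. *)

lemma conv_refl [simp]: "conv t t"
  by (simp add: conv_def)

lemma conv_sym: "conv s t \<Longrightarrow> conv t s"
  unfolding conv_def by (rule equivclp_sym)

lemma conv_trans: "conv s t \<Longrightarrow> conv t u \<Longrightarrow> conv s u"
  unfolding conv_def by (rule equivclp_trans)

lemma betaeta_imp_conv: "betaeta s t \<Longrightarrow> conv s t"
  unfolding conv_def by blast

lemma conv_AppL: "conv s s' \<Longrightarrow> conv (App s t) (App s' t)"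
  unfolding conv_def
  by (induct rule: equivclp_induct) (auto intro: equivclp_into_equivclp betaeta.appL)

lemma conv_AppR: "conv t t' \<Longrightarrow> conv (App s t) (App s t')"
  unfolding conv_def
  by (induct rule: equivclp_induct) (auto intro: equivclp_into_equivclp betaeta.appR)

lemma subst_lift: "subst (lift t k) s k = t"
  by (induct t arbitrary: k s) auto

lemma conv_K_App: "conv (App (App K_trm a) b) a"
proof -
  have "betaeta (App K_trm a) (Lam (lift a 0))"
    unfolding K_trm_def using betaeta.beta[of "Lam (Var 1)" a] by simp
  then have "conv (App (App K_trm a) b) (App (Lam (lift a 0)) b)"
    by (intro conv_AppL betaeta_imp_conv)
  moreover have "betaeta (App (Lam (lift a 0)) b) a"
    using betaeta.beta[of "lift a 0" b] by (simp add: subst_lift)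
  ultimately show ?thesis by (meson betaeta_imp_conv conv_trans)
qed

lemma conv_KI_App: "conv (App (App (App K_trm I_trm) a) b) b"
proof -
  have "conv (App (App (App K_trm I_trm) a) b) (App I_trm b)"
    by (intro conv_AppL conv_K_App)
  moreover have "betaeta (App I_trm b) b"
    unfolding I_trm_def using betaeta.beta[of "Var 0" b] by simp
  ultimately show ?thesis by (meson betaeta_imp_conv conv_trans)
qed

lemma bclosedD: "bclosed r \<Longrightarrow> r t1 t2 \<Longrightarrow> conv t1' t1 \<Longrightarrow> conv t2' t2 \<Longrightarrow> r t1' t2'"
  unfolding bclosed_def by blast

lemma bclosed_iff: "bclosed r \<Longrightarrow> conv t1' t1 \<Longrightarrow> conv t2' t2 \<Longrightarrow> r t1' t2' \<longleftrightarrow> r t1 t2"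
  by (meson bclosedD conv_sym)

lemma bclosed_converse: "bclosed r \<Longrightarrow> bclosed (\<lambda>t t'. r t' t)"
  unfolding bclosed_def by blast

lemma bclosed_relcomp: "bclosed r \<Longrightarrow> bclosed s \<Longrightarrow> bclosed (\<lambda>t t'. \<exists>m. r t m \<and> s m t')"
  unfolding bclosed_def by (meson conv_refl)

lemma bclosed_arrow:
  "bclosed s \<Longrightarrow> bclosed (\<lambda>t t'. \<forall>a a'. r a a' \<longrightarrow> s (App t a) (App t' a'))"
  unfolding bclosed_def by (meson conv_AppL)

lemma bclosed_forall:
  "(\<And>r. bclosed r \<Longrightarrow> bclosed (f r)) \<Longrightarrow> bclosed (\<lambda>t t'. \<forall>r. bclosed r \<longrightarrow> f r t t')"
  unfolding bclosed_def by blast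

lemma bclosed_graph: "bclosed (\<lambda>t t'. conv (App u t) t')"
  unfolding bclosed_def by (meson conv_AppR conv_sym conv_trans)

lemma bclosed_case_nat:
  assumes "bclosed r" and "\<forall>i \<in> fvs (All R). bclosed (\<gamma> i)"
  shows "\<forall>i \<in> fvs R. bclosed (case_nat r \<gamma> i)"
proof
  fix i assume "i \<in> fvs R"
  then show "bclosed (case_nat r \<gamma> i)"
    using assms by (cases i) force+
qed

lemma interp_bclosed: "\<forall>i \<in> fvs R. bclosed (\<gamma> i) \<Longrightarrow> bclosed (interp \<gamma> R)"
proof (induct R arbitrary: \<gamma>)
  case (All R)
  then show ?case
    by (simp add: bclosed_forall bclosed_case_nat)
qed (simp_all add: bclosed_converse bclosed_relcomp bclosed_arrow bclosed_graph)

definition env_insert ::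
    "(nat \<Rightarrow> trm \<Rightarrow> trm \<Rightarrow> bool) \<Rightarrow> nat \<Rightarrow> (trm \<Rightarrow> trm \<Rightarrow> bool) \<Rightarrow> nat \<Rightarrow> trm \<Rightarrow> trm \<Rightarrow> bool"
  where "env_insert \<gamma> k r = (\<lambda>i. if i < k then \<gamma> i else if i = k then r else \<gamma> (i - 1))"

lemma env_insert_0: "env_insert \<gamma> 0 r = case_nat r \<gamma>"
  by (rule ext) (auto simp: env_insert_def split: nat.split)

lemma case_nat_env_insert:
  "case_nat r' (env_insert \<gamma> k r) = env_insert (case_nat r' \<gamma>) (Suc k) r"
  by (rule ext) (auto simp: env_insert_def split: nat.split)

lemma interp_liftT: "interp (env_insert \<gamma> k r) (liftT S k) = interp \<gamma> S"
proof (induct S arbitrary: \<gamma> k)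
  case (All S)
  then show ?case by (simp add: case_nat_env_insert)
qed (auto simp: env_insert_def)

lemma interp_substT: "interp \<gamma> (substT R S k) = interp (env_insert \<gamma> k (interp \<gamma> S)) R"
proof (induct R arbitrary: \<gamma> k S)
  case (All R)
  have "interp (case_nat r \<gamma>) (liftT S 0) = interp \<gamma> S" for r
    by (metis interp_liftT env_insert_0)
  with All show ?case by (simp add: case_nat_env_insert)
qed (auto simp: env_insert_def)

lemma interp_mono_pol:
  assumes "pol p k R" and "\<forall>i. i \<noteq> k \<longrightarrow> \<gamma> i = \<gamma>' i"
    and "if p then \<gamma> k \<le> \<gamma>' k else \<gamma>' k \<le> \<gamma> k"
  shows "interp \<gamma> R \<le> interp \<gamma>' R"
  using assms
proof (induct R arbitrary: p k \<gamma> \<gamma>')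
  case (TV i)
  then show ?case by (cases "i = k") (auto split: if_splits)
next
  case (Arr R S)
  have "interp \<gamma>' R \<le> interp \<gamma> R"
    using Arr.hyps(1)[of "\<not> p" k \<gamma>' \<gamma>] Arr.prems by (auto split: if_splits)
  moreover have "interp \<gamma> S \<le> interp \<gamma>' S"
    using Arr.hyps(2)[of p k \<gamma> \<gamma>'] Arr.prems by auto
  ultimately show ?case by (auto simp: le_fun_def)
next
  case (All R)
  have "interp (case_nat r \<gamma>) R \<le> interp (case_nat r \<gamma>') R" for r
    using All.prems by (intro All.hyps[of p "Suc k"]) (auto split: nat.split)
  then show ?case by (auto simp: le_fun_def)
next
  case (Cnv R)
  then have "interp \<gamma> R \<le> interp \<gamma>' R" by simp
  then show ?case by (auto simp: le_fun_def)
next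
  case (Cmp R S)
  have "interp \<gamma> R \<le> interp \<gamma>' R" "interp \<gamma> S \<le> interp \<gamma>' S"
    using Cmp.hyps(1)[of p k \<gamma> \<gamma>'] Cmp.hyps(2)[of p k \<gamma> \<gamma>'] Cmp.prems by simp_all
  then show ?case by (simp add: le_fun_def) blast
qed auto

lemma mono_interp_case_nat: "pol True 0 R \<Longrightarrow> mono (\<lambda>r. interp (case_nat r \<gamma>) R)"
  by (rule monoI, rule interp_mono_pol) (auto split: nat.split)

lemma interp_bullet:
  assumes "bclosed (interp \<gamma> S)"
  shows "interp \<gamma> (bullet u S) t t' \<longleftrightarrow> interp \<gamma> S (App u t) (App u t')"
proof
  assume "interp \<gamma> (bullet u S) t t'"
  then obtain m m' where "conv (App u t) m" "interp \<gamma> S m m'" "conv (App u t') m'"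
    by (auto simp: bullet_def)
  then show "interp \<gamma> S (App u t) (App u t')"
    using assms bclosedD by blast
qed (simp add: bullet_def, blast intro: conv_refl)

lemma interp_Incl:
  assumes "bclosed (interp \<gamma> B)"
  shows "interp \<gamma> (Incl A B) t t' \<longleftrightarrow> interp \<gamma> A \<le> interp \<gamma> B"
proof -
  have "bclosed (interp \<gamma> (Arr A B))"
    using assms by (simp add: bclosed_arrow)
  then have "interp \<gamma> (Incl A B) t t' \<longleftrightarrow>
      interp \<gamma> (Arr A B) (App (App K_trm I_trm) t) (App (App K_trm I_trm) t')"
    unfolding Incl_def by (rule interp_bullet)
  then show ?thesis
    by (simp add: bclosed_iff[OF assms conv_KI_App conv_KI_App] le_fun_def)
qed

lemma interp_Impl:
  assumes "bclosed (interp \<gamma> B)"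
  shows "interp \<gamma> (Impl A B) t t' \<longleftrightarrow> ((\<exists>a a'. interp \<gamma> A a a') \<longrightarrow> interp \<gamma> B t t')"
proof -
  have "bclosed (interp \<gamma> (Arr A B))"
    using assms by (simp add: bclosed_arrow)
  then have "interp \<gamma> (Impl A B) t t' \<longleftrightarrow>
      interp \<gamma> (Arr A B) (App (K_trm) t) (App (K_trm) t')"
    unfolding Impl_def by (rule interp_bullet)
  then show ?thesis
    by (simp add: bclosed_iff[OF assms conv_K_App conv_K_App])
qed

lemma interp_Equi:
  assumes "bclosed (interp \<gamma> A)" and "bclosed (interp \<gamma> B)"
  shows "interp \<gamma> (Equi A B) t t' \<longleftrightarrow> interp \<gamma> A = interp \<gamma> B"
  using assms by (auto simp: Equi_def interp_Incl)

lemma interp_RecT: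
  "interp \<gamma> (RecT R) = Inf {r. bclosed r \<and> interp (case_nat r \<gamma>) R \<le> r}"
  by (fastforce simp: RecT_def interp_Impl interp_Incl le_fun_def)

lemma fvs_RecT: "fvs (RecT R) = fvs (All R)"
  by (auto simp: RecT_def Impl_def Incl_def bullet_def)

lemma Inf_prefixpoints_fixpoint:
  fixes F :: "'a::complete_lattice \<Rightarrow> 'a"
  assumes "mono F" and "P (Inf {r. P r \<and> F r \<le> r})" and "\<And>r. P r \<Longrightarrow> P (F r)"
  shows "F (Inf {r. P r \<and> F r \<le> r}) = Inf {r. P r \<and> F r \<le> r}"
    (is "F ?\<mu> = ?\<mu>")
proof (rule antisym)
  show "F ?\<mu> \<le> ?\<mu>"
  proof (rule Inf_greatest)
    fix r assume "r \<in> {r. P r \<and> F r \<le> r}"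
    then have "?\<mu> \<le> r" and "F r \<le> r" by (auto intro: Inf_lower)
    then show "F ?\<mu> \<le> r" using \<open>mono F\<close> by (meson monoD order_trans)
  qed
  with assms show "?\<mu> \<le> F ?\<mu>"
    by (blast intro: Inf_lower monoD)
qed

theorem mainTheorem3:
  fixes R :: rty and \<gamma> :: "nat \<Rightarrow> trm \<Rightarrow> trm \<Rightarrow> bool" and t1 t2 :: trm
  assumes "pol True 0 R"
    and "\<forall>i \<in> fvs (RecT R). bclosed (\<gamma> i)"
  shows "interp \<gamma> (Equi (RecT R) (substT R (RecT R) 0)) t1 t2"
proof -
  define F where "F = (\<lambda>r. interp (case_nat r \<gamma>) R)"
  have mono_F: "mono F"
    unfolding F_def using assms(1) by (rule mono_interp_case_nat)
  have closed_F: "bclosed (F r)" if "bclosed r" for r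
    unfolding F_def using that assms(2)
    by (intro interp_bclosed bclosed_case_nat) (simp_all add: fvs_RecT)
  have closed_Rec: "bclosed (interp \<gamma> (RecT R))"
    using assms(2) by (rule interp_bclosed)
  have Rec_eq: "interp \<gamma> (RecT R) = Inf {r. bclosed r \<and> F r \<le> r}"
    by (simp add: interp_RecT F_def)
  have fixpoint: "F (interp \<gamma> (RecT R)) = interp \<gamma> (RecT R)"
    unfolding Rec_eq using mono_F closed_Rec[unfolded Rec_eq] closed_F
    by (rule Inf_prefixpoints_fixpoint[of F bclosed])
  have unfold: "interp \<gamma> (substT R (RecT R) 0) = F (interp \<gamma> (RecT R))"
    by (simp add: interp_substT env_insert_0 F_def)
  show ?thesis
    using closed_Rec by (simp add: interp_Equi unfold fixpoint)
qed

end
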